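(* Let $X,Y$ be real Hilbert spaces and $a:X\times Y\to\mathbb{R}\cup\{+\infty\}$ such that for every $y\in Y$ the function $a(\cdot,y)$ is proper, lower semicontinuous and paraconvex on $X$, and for every $x\in X$ the function $a(x,\cdot)$ is concave on $Y$. Assume $\beta:=\inf_{x\in X}\sup_{y\in Y}a(x,y)<+\infty$. If there exist $y_1,y_2\in Y$ and $\bar x\in\mathrm{int}\,\mathrm{dom}\,a(\cdot,y_1)\cap\mathrm{int}\,\mathrm{dom}\,a(\cdot,y_2)$ with $a(\bar x,y_1)\ge\beta$, $a(\bar x,y_2)\ge\beta$ such that $a(\cdot,y_1)$ and $a(\cdot,y_2)$ satisfy $ZS(0,\bar x)$, then $\sup_{y\in Y}\inf_{x\in X}a(x,y)=\inf_{x\in X}\sup_{y\in Y}a(x,y)$.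
   Context: A function $f:X\to\mathbb{R}\cup\{+\infty\}$ is paraconvex if there is $c>0$ such that $f+c\|\cdot\|^2$ is convex; proper means $\mathrm{dom}(f)=\{x:f(x)<+\infty\}\ne\emptyset$ and $f$ is minorized by some function $x\mapsto-a\|x\|^2+\langle v,x\rangle+c$ with $a\ge0$, $v\in X^*$, $c\in\mathbb{R}$. $\partial_{lsc}f(\bar x)$ is the set of $(a,v)\in\mathbb{R}_+\times X^*$ with $f(x)-f(\bar x)\ge\langle v,x-\bar x\rangle-a\|x\|^2+a\|\bar x\|^2$ for all $x\in X$. Functions $f,g$ satisfy $ZS(0,\bar x)$ if $0=(0,0)\in\mathrm{co}(\partial_{lsc}f(\bar x)\cup\partial_{lsc}g(\bar x))$, convex hull in $\mathbb{R}\times X^*$. *)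

theory Defs
  imports "HOL-Analysis.Analysis"
begin

text \<open>Extended-real valued functions with values in R \<union> {+\<infinity>} are modelled as
  functions into ereal (never taking the value -\<infinity>, assumed separately).\<close>

definition ext_dom :: "('a \<Rightarrow> ereal) \<Rightarrow> 'a set" where
  "ext_dom f = {x. f x < \<infinity>}"

definition ext_convex :: "('a::real_vector \<Rightarrow> ereal) \<Rightarrow> bool" where
  "ext_convex f \<longleftrightarrow> (\<forall>x y. \<forall>u::real. 0 < u \<and> u < 1 \<longrightarrow>
      f (u *\<^sub>R x + (1 - u) *\<^sub>R y) \<le> ereal u * f x + ereal (1 - u) * f y)"

definition ext_concave :: "('a::real_vector \<Rightarrow> ereal) \<Rightarrow> bool" where
  "ext_concave f \<longleftrightarrow> (\<forall>x y. \<forall>u::real. 0 < u \<and> u < 1 \<longrightarrow>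
      ereal u * f x + ereal (1 - u) * f y \<le> f (u *\<^sub>R x + (1 - u) *\<^sub>R y))"

definition paraconvex :: "('a::real_normed_vector \<Rightarrow> ereal) \<Rightarrow> bool" where
  "paraconvex f \<longleftrightarrow> (\<exists>c>0. ext_convex (\<lambda>x. f x + ereal (c * (norm x)\<^sup>2)))"

text \<open>Proper: nonempty domain and minorized by a quadratic function
  (dual space identified with the Hilbert space via Riesz).\<close>
definition proper_fun :: "('a::real_inner \<Rightarrow> ereal) \<Rightarrow> bool" where
  "proper_fun f \<longleftrightarrow> ext_dom f \<noteq> {} \<and>
     (\<exists>a\<ge>0. \<exists>v c. \<forall>x. ereal (- a * (norm x)\<^sup>2 + inner v x + c) \<le> f x)"

definition lsc :: "('a::topological_space \<Rightarrow> ereal) \<Rightarrow> bool" where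
  "lsc f \<longleftrightarrow> (\<forall>t. closed {x. f x \<le> t})"

definition subdiff_lsc :: "('a::real_inner \<Rightarrow> ereal) \<Rightarrow> 'a \<Rightarrow> (real \<times> 'a) set" where
  "subdiff_lsc f xb = {(a, v). a \<ge> 0 \<and> (\<forall>x. f x - f xb \<ge>
       ereal (inner v (x - xb) - a * (norm x)\<^sup>2 + a * (norm xb)\<^sup>2))}"

definition ZS0 :: "('a::real_inner \<Rightarrow> ereal) \<Rightarrow> ('a \<Rightarrow> ereal) \<Rightarrow> 'a \<Rightarrow> bool" where
  "ZS0 f g xb \<longleftrightarrow> (0::real, 0::'a) \<in> convex hull (subdiff_lsc f xb \<union> subdiff_lsc g xb)"

end

theory Submission
  imports Defs
begin

text \<open>Writing \<open>f = a(\<cdot>,y\<^sub>1)\<close> and \<open>g = a(\<cdot>,y\<^sub>2)\<close>, the condition \<open>ZS(0,x\<^sub>b)\<close> expresses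
  \<open>0 = t p + (1-t) q\<close> with \<open>p\<close>, \<open>q\<close> lsc-subgradients of \<open>f\<close>, \<open>g\<close> at \<open>x\<^sub>b\<close>. The affine
  minorants they define add up to zero, so \<open>x\<^sub>b\<close> globally minimises \<open>t f + (1-t) g\<close>.
  By concavity in \<open>y\<close>, for \<open>y\<^sub>t = t y\<^sub>1 + (1-t) y\<^sub>2\<close> and every \<open>x\<close>,
  \<open>a(x,y\<^sub>t) \<ge> t f(x) + (1-t) g(x) \<ge> t f(x\<^sub>b) + (1-t) g(x\<^sub>b) \<ge> \<beta>\<close>, hence \<open>sup inf \<ge> \<beta>\<close>;
  the reverse inequality always holds.\<close>

definition subgrad_minorant :: "real \<times> 'a::real_inner \<Rightarrow> 'a \<Rightarrow> 'a \<Rightarrow> real" where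
  "subgrad_minorant s xb x = inner (snd s) (x - xb) - fst s * (norm x)\<^sup>2 + fst s * (norm xb)\<^sup>2"

lemma subgrad_minorant_convex_comb:
  "subgrad_minorant (u *\<^sub>R s + w *\<^sub>R r) xb x =
     u * subgrad_minorant s xb x + w * subgrad_minorant r xb x"
  by (simp add: subgrad_minorant_def inner_add_left algebra_simps)

lemma subgrad_minorant_zero [simp]: "subgrad_minorant 0 xb x = 0"
  by (simp add: subgrad_minorant_def)

lemma mem_subdiff_lsc_iff:
  "s \<in> subdiff_lsc f xb \<longleftrightarrow> 0 \<le> fst s \<and> (\<forall>x. ereal (subgrad_minorant s xb x) \<le> f x - f xb)"
  by (cases s) (simp add: subdiff_lsc_def subgrad_minorant_def)

lemma subdiff_lsc_minorant:
  assumes "s \<in> subdiff_lsc f xb" and "f xb = ereal fb"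
  shows "ereal (fb + subgrad_minorant s xb x) \<le> f x"
proof -
  have "ereal (subgrad_minorant s xb x) \<le> f x - ereal fb"
    using assms by (simp add: mem_subdiff_lsc_iff)
  then show ?thesis
    by (cases "f x") (simp_all add: algebra_simps)
qed

lemma convex_subdiff_lsc: "convex (subdiff_lsc f xb)"
proof (rule convexI)
  fix s r and u w :: real
  assume s: "s \<in> subdiff_lsc f xb" and r: "r \<in> subdiff_lsc f xb"
    and uw: "0 \<le> u" "0 \<le> w" "u + w = 1"
  have "ereal (subgrad_minorant (u *\<^sub>R s + w *\<^sub>R r) xb x) \<le> f x - f xb" for x
  proof -
    let ?ms = "subgrad_minorant s xb x" and ?mr = "subgrad_minorant r xb x"
    have "u * ?ms + w * ?mr \<le> u * max ?ms ?mr + w * max ?ms ?mr"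
      using uw by (intro add_mono mult_left_mono) auto
    then have "subgrad_minorant (u *\<^sub>R s + w *\<^sub>R r) xb x \<le> max ?ms ?mr"
      using uw by (simp add: subgrad_minorant_convex_comb algebra_simps flip: distrib_right)
    moreover have "ereal (max ?ms ?mr) \<le> f x - f xb"
      using s r by (simp add: mem_subdiff_lsc_iff)
    ultimately show ?thesis
      by (meson ereal_less_eq(3) order_trans)
  qed
  moreover have "0 \<le> fst (u *\<^sub>R s + w *\<^sub>R r)"
    using s r uw by (simp add: mem_subdiff_lsc_iff)
  ultimately show "u *\<^sub>R s + w *\<^sub>R r \<in> subdiff_lsc f xb"
    by (simp add: mem_subdiff_lsc_iff)
qed

text \<open>The conditional memberships allow \<open>S\<close> or \<open>T\<close> to be empty.\<close>

lemma convex_hull_Un_convex_cases: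
  fixes S T :: "'a::real_vector set"
  assumes "convex S" "convex T" "z \<in> convex hull (S \<union> T)"
  obtains u s t where "0 \<le> u" "u \<le> 1" "u \<noteq> 0 \<Longrightarrow> s \<in> S" "u \<noteq> 1 \<Longrightarrow> t \<in> T"
    "z = u *\<^sub>R s + (1 - u) *\<^sub>R t"
proof (cases "S = {} \<or> T = {}")
  case True
  then show ?thesis
    using assms that[of 0 z z] that[of 1 z z] by (auto simp: hull_same)
next
  case False
  define F where "F b = (if b then S else T)" for b
  have "convex hull (\<Union>(F ` UNIV)) =
      {\<Sum>b\<in>UNIV. c b *\<^sub>R p b | c p.
        (\<forall>b\<in>UNIV. 0 \<le> c b) \<and> sum c UNIV = 1 \<and> (\<forall>b\<in>UNIV. p b \<in> F b)}"
    using assms False by (intro convex_hull_finite_union) (auto simp: F_def)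
  moreover have "\<Union>(F ` UNIV) = S \<union> T"
    by (auto simp: F_def)
  ultimately obtain c p where
    "0 \<le> c False" "0 \<le> c True" "c False + c True = 1" "p False \<in> T" "p True \<in> S"
    "z = c False *\<^sub>R p False + c True *\<^sub>R p True"
    using assms(3) by (auto simp: UNIV_bool F_def)
  moreover have "c False = 1 - c True"
    using \<open>c False + c True = 1\<close> by simp
  ultimately show ?thesis
    by (intro that[of "c True" "p True" "p False"]) auto
qed

text \<open>Since \<open>ereal 0 * \<infinity> = 0\<close>, for \<open>t = 0\<close> (resp. \<open>t = 1\<close>) the values of \<open>f\<close>
  (resp. \<open>g\<close>) drop out, as they should.\<close>

lemma ZS0_weighted_min:
  fixes f g :: "'a::real_inner \<Rightarrow> ereal"
  assumes fb: "f xb = ereal fb" and gb: "g xb = ereal gb" and zs: "ZS0 f g xb"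
  obtains t where "0 \<le> t" "t \<le> 1"
    "\<And>x. ereal t * f xb + ereal (1 - t) * g xb \<le> ereal t * f x + ereal (1 - t) * g x"
proof -
  obtain t p q where t: "0 \<le> t" "t \<le> 1"
    and p: "t \<noteq> 0 \<Longrightarrow> p \<in> subdiff_lsc f xb" and q: "t \<noteq> 1 \<Longrightarrow> q \<in> subdiff_lsc g xb"
    and zero: "0 = t *\<^sub>R p + (1 - t) *\<^sub>R q"
    using zs unfolding ZS0_def zero_prod_def[symmetric]
    by (rule convex_hull_Un_convex_cases[OF convex_subdiff_lsc convex_subdiff_lsc]) blast
  have "ereal t * f xb + ereal (1 - t) * g xb \<le> ereal t * f x + ereal (1 - t) * g x" for x
  proof -
    have "t * subgrad_minorant p xb x + (1 - t) * subgrad_minorant q xb x = 0"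
      by (metis zero subgrad_minorant_convex_comb subgrad_minorant_zero)
    then have "ereal t * f xb + ereal (1 - t) * g xb =
        ereal (t * (fb + subgrad_minorant p xb x) + (1 - t) * (gb + subgrad_minorant q xb x))"
      by (simp add: fb gb algebra_simps)
    also have "\<dots> = ereal t * ereal (fb + subgrad_minorant p xb x)
        + ereal (1 - t) * ereal (gb + subgrad_minorant q xb x)"
      by simp
    also have "\<dots> \<le> ereal t * f x + ereal (1 - t) * g x"
    proof (rule add_mono)
      show "ereal t * ereal (fb + subgrad_minorant p xb x) \<le> ereal t * f x"
        using t p subdiff_lsc_minorant[of p f xb fb x] fb
        by (cases "t = 0")
          (simp_all add: ereal_mult_left_mono zero_ereal_def[symmetric] del: times_ereal.simps)
      show "ereal (1 - t) * ereal (gb + subgrad_minorant q xb x) \<le> ereal (1 - t) * g x"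
        using t q subdiff_lsc_minorant[of q g xb gb x] gb
        by (cases "t = 1")
          (simp_all add: ereal_mult_left_mono zero_ereal_def[symmetric] del: times_ereal.simps)
    qed
    finally show ?thesis .
  qed
  then show ?thesis
    by (rule that[OF t])
qed

lemma ext_concave_convex_comb:
  assumes "ext_concave h" "0 \<le> t" "t \<le> 1"
  shows "ereal t * h y1 + ereal (1 - t) * h y2 \<le> h (t *\<^sub>R y1 + (1 - t) *\<^sub>R y2)"
  using assms by (cases "t = 0 \<or> t = 1") (auto simp: ext_concave_def zero_ereal_def[symmetric])

lemma ereal_convex_comb_lower_bound:
  assumes "c \<le> p" "c \<le> q" "0 \<le> t" "t \<le> 1"
  shows "c \<le> ereal t * p + ereal (1 - t) * q"
proof -
  have "c = ereal t * c + ereal (1 - t) * c"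
    using assms(3,4)
    by (cases c; cases "t = 0"; cases "t = 1") (auto simp: zero_ereal_def[symmetric] algebra_simps)
  also have "\<dots> \<le> ereal t * p + ereal (1 - t) * q"
    using assms by (intro add_mono ereal_mult_left_mono) auto
  finally show ?thesis .
qed

theorem mainTheorem16:
  fixes a :: "'x::{real_inner,complete_space} \<Rightarrow> 'y::{real_inner,complete_space} \<Rightarrow> ereal"
  assumes no_minf: "\<And>x y. a x y \<noteq> -\<infinity>"
    and prop_x: "\<And>y. proper_fun (\<lambda>x. a x y)"
    and lsc_x: "\<And>y. lsc (\<lambda>x. a x y)"
    and para_x: "\<And>y. paraconvex (\<lambda>x. a x y)"
    and conc_y: "\<And>x. ext_concave (\<lambda>y. a x y)"
    and beta_fin: "(INF x. SUP y. a x y) < \<infinity>"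
    and xb: "xb \<in> interior (ext_dom (\<lambda>x. a x y1)) \<inter> interior (ext_dom (\<lambda>x. a x y2))"
    and ge1: "a xb y1 \<ge> (INF x. SUP y. a x y)"
    and ge2: "a xb y2 \<ge> (INF x. SUP y. a x y)"
    and zs: "ZS0 (\<lambda>x. a x y1) (\<lambda>x. a x y2) xb"
  shows "(SUP y. INF x. a x y) = (INF x. SUP y. a x y)"
proof (rule antisym)
  show "(SUP y. INF x. a x y) \<le> (INF x. SUP y. a x y)"
    by (intro SUP_least INF_greatest) (meson INF_lower UNIV_I SUP_upper order_trans)
next
  let ?\<beta> = "INF x. SUP y. a x y"
  have "xb \<in> ext_dom (\<lambda>x. a x y1)" "xb \<in> ext_dom (\<lambda>x. a x y2)"
    using xb interior_subset by blast+
  then have "a xb y1 < \<infinity>" "a xb y2 < \<infinity>"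
    by (simp_all add: ext_dom_def)
  then obtain fb gb where "a xb y1 = ereal fb" "a xb y2 = ereal gb"
    using no_minf[of xb y1] no_minf[of xb y2] by (cases "a xb y1"; cases "a xb y2") auto
  then obtain t where t: "0 \<le> t" "t \<le> 1" and min:
    "\<And>x. ereal t * a xb y1 + ereal (1 - t) * a xb y2 \<le> ereal t * a x y1 + ereal (1 - t) * a x y2"
    by (rule ZS0_weighted_min[OF _ _ zs]) blast
  have "?\<beta> \<le> a x (t *\<^sub>R y1 + (1 - t) *\<^sub>R y2)" for x
  proof -
    have "?\<beta> \<le> ereal t * a xb y1 + ereal (1 - t) * a xb y2"
      using ereal_convex_comb_lower_bound[OF ge1 ge2 t] .
    also have "\<dots> \<le> ereal t * a x y1 + ereal (1 - t) * a x y2"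
      by (rule min)
    also have "\<dots> \<le> a x (t *\<^sub>R y1 + (1 - t) *\<^sub>R y2)"
      using ext_concave_convex_comb[OF conc_y t] .
    finally show ?thesis .
  qed
  then have "?\<beta> \<le> (INF x. a x (t *\<^sub>R y1 + (1 - t) *\<^sub>R y2))"
    by (rule INF_greatest)
  also have "\<dots> \<le> (SUP y. INF x. a x y)"
    by (rule SUP_upper) simp
  finally show "?\<beta> \<le> (SUP y. INF x. a x y)" .
qed

end
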